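(* Let $p$ be an odd prime with $p\equiv 3\pmod 4$. Then for any odd Dirichlet characters $\chi_1,\chi_2$ modulo $p$ with $\chi_1\chi_2\neq\chi_0$, $$\sum_{a=0}^{p-1}\sum_{b=0}^{p-1}\sum_{c=0}^{p-1}\sum_{d=0}^{p-1}\overline{\chi_1}\,\overline{\chi_2}(a^4+b^4-c^4-d^4)\,\chi_1\chi_2(a^2+b^2-c^2-d^2)=0.$$
   Context: $\chi_0$ denotes the principal character modulo $p$. A character $\chi$ is odd if $\chi(-1)=-1$. Dirichlet characters modulo $p$ are extended by $\chi(x)=0$ when $p\mid x$, and $\overline{\chi}$ denotes the complex conjugate character; $\overline{\chi_1}\,\overline{\chi_2}(x)$ means $\overline{\chi_1}(x)\overline{\chi_2}(x)$. *)

theory Defs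
  imports "HOL-Number_Theory.Number_Theory" "HOL-Analysis.Analysis"
begin

definition dirichlet_char :: "nat \<Rightarrow> (int \<Rightarrow> complex) \<Rightarrow> bool" where
  "dirichlet_char m chi \<longleftrightarrow> m > 0 \<and>
     (\<forall>x y. chi (x * y) = chi x * chi y) \<and>
     (\<forall>x. chi (x + int m) = chi x) \<and>
     (\<forall>x. chi x = 0 \<longleftrightarrow> \<not> coprime x (int m))"

definition principal_char :: "nat \<Rightarrow> int \<Rightarrow> complex" where
  "principal_char m x = (if coprime x (int m) then 1 else 0)"

definition odd_char :: "(int \<Rightarrow> complex) \<Rightarrow> bool" where
  "odd_char chi \<longleftrightarrow> chi (-1) = -1"

end

theory Submission
  imports Defs
begin

text \<open>Put \<open>\<chi> = \<chi>\<^sub>1\<chi>\<^sub>2\<close>; it is even and non-principal.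
  Replacing \<open>(a, b, c, d)\<close> by \<open>(ta, tb, tc, td)\<close> for a unit \<open>t\<close> permutes the terms of the sum
  and multiplies each of them by \<open>\<chi>(t)\<^sup>2 / \<chi>(t)\<^sup>4 = conj(\<chi>(t))\<^sup>2\<close>, so the sum vanishes as soon as
  \<open>\<chi>(t)\<^sup>2 \<noteq> 1\<close> for some unit \<open>t\<close>. Such a \<open>t\<close> exists: for \<open>p \<equiv> 3 (mod 4)\<close> the exponent
  \<open>(p - 1)/2\<close> is odd, so if \<open>\<chi>\<^sup>2\<close> were principal, Euler's criterion would give
  \<open>\<chi>(x) = \<chi>(x)\<^bsup>(p-1)/2\<^esup> = \<chi>(\<plusminus>1) = 1\<close> for every unit \<open>x\<close>.\<close>

lemma dirichlet_char_mult: "dirichlet_char m chi \<Longrightarrow> chi (x * y) = chi x * chi y"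
  unfolding dirichlet_char_def by blast

lemma dirichlet_char_add_mult:
  assumes "dirichlet_char m chi"
  shows "chi (x + k * int m) = chi x"
proof (induction k rule: int_induct[where k = 0])
  case base
  show ?case by simp
next
  case (step1 i)
  have "chi (x + (i + 1) * int m) = chi (x + i * int m + int m)"
    by (simp add: algebra_simps)
  with step1 assms show ?case by (simp add: dirichlet_char_def)
next
  case (step2 i)
  have "chi (x + (i - 1) * int m + int m) = chi (x + i * int m)"
    by (simp add: algebra_simps)
  with step2 assms show ?case by (simp add: dirichlet_char_def)
qed

lemma dirichlet_char_cong:
  assumes "dirichlet_char m chi" "[x = y] (mod int m)"
  shows "chi x = chi y"
proof -
  obtain k where "y = x + int m * k"
    using assms(2) cong_iff_lin by blast
  then show ?thesis
    using dirichlet_char_add_mult[OF assms(1), of x k] by (simp add: mult.commute)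
qed

lemma dirichlet_char_one:
  assumes "dirichlet_char m chi"
  shows "chi 1 = 1"
proof -
  have "chi 1 \<noteq> 0"
    using assms unfolding dirichlet_char_def by simp
  moreover have "chi 1 = chi 1 * chi 1"
    using dirichlet_char_mult[OF assms, of 1 1] by simp
  ultimately show ?thesis by simp
qed

lemma dirichlet_char_power: "dirichlet_char m chi \<Longrightarrow> chi (x ^ n) = chi x ^ n"
  by (induction n) (simp_all add: dirichlet_char_one dirichlet_char_mult[of m chi])

lemma dirichlet_char_times:
  assumes "dirichlet_char m chi1" "dirichlet_char m chi2"
  shows "dirichlet_char m (\<lambda>x. chi1 x * chi2 x)"
  using assms unfolding dirichlet_char_def by (auto simp: algebra_simps)

lemma dirichlet_char_norm:
  assumes "dirichlet_char m chi" "coprime x (int m)"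
  shows "norm (chi x) = 1"
proof -
  have "m > 0"
    using assms(1) unfolding dirichlet_char_def by simp
  define n where "n = nat (x mod int m)"
  have x_cong_n: "[x = int n] (mod int m)"
    unfolding n_def using \<open>m > 0\<close> by (simp add: cong_def)
  then have "coprime n m"
    using assms(2) by (metis cong_imp_coprime coprime_int_iff)
  then have "[int n ^ totient m = 1] (mod int m)"
    using euler_theorem by (metis cong_int_iff of_nat_1 of_nat_power)
  then have "[x ^ totient m = 1] (mod int m)"
    using x_cong_n cong_pow cong_trans by blast
  then have "chi x ^ totient m = 1"
    using dirichlet_char_cong[OF assms(1)] dirichlet_char_power[OF assms(1)]
      dirichlet_char_one[OF assms(1)] by metis
  moreover have "totient m > 0"
    using \<open>m > 0\<close> by simp
  ultimately show ?thesis
    using power_eq_1_iff by fastforce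
qed

lemma even_char_eq_principal_if_squares_one:
  assumes "prime p" "[p = 3] (mod 4)" "dirichlet_char p chi" "chi (-1) = 1"
    and squares_one: "\<And>x. coprime x (int p) \<Longrightarrow> chi x ^ 2 = 1"
  shows "chi = principal_char p"
proof
  fix x
  show "chi x = principal_char p x"
  proof (cases "coprime x (int p)")
    case False
    then show ?thesis
      using assms(3) unfolding dirichlet_char_def principal_char_def by simp
  next
    case True
    define k where "k = (p - 1) div 2"
    have "p mod 4 = 3"
      using assms(2) by (simp add: Cong.cong_def)
    then have "odd k" "p > 2"
      unfolding k_def by presburger+
    have "\<not> [x = 0] (mod int p)"
      using True assms(1) by (auto simp: cong_0_iff)
    then have "Legendre x p = 1 \<or> Legendre x p = -1"
      unfolding Legendre_def by simp
    moreover have "[Legendre x p = x ^ k] (mod int p)"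
      unfolding k_def using euler_criterion assms(1) \<open>p > 2\<close> by blast
    ultimately have "chi (x ^ k) = 1"
      using dirichlet_char_cong[OF assms(3)] dirichlet_char_one[OF assms(3)] assms(4) by metis
    moreover obtain j where "k = 2 * j + 1"
      using \<open>odd k\<close> oddE by blast
    then have "chi (x ^ k) = (chi x ^ 2) ^ j * chi x"
      unfolding dirichlet_char_power[OF assms(3)] by (simp add: power_add power_mult)
    then have "chi (x ^ k) = chi x"
      using squares_one[OF True] by simp
    ultimately show ?thesis
      using True unfolding principal_char_def by simp
  qed
qed

lemma bij_betw_mult_mod:
  fixes a n :: int
  assumes "coprime a n" "n > 0"
  shows "bij_betw (\<lambda>x. a * x mod n) {0..<n} {0..<n}"
proof -
  have "{0..<n} = {1..<n} \<union> {0}"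
    using assms(2) by auto
  then show ?thesis
    using bij_betw_int_remainders_mult[OF assms(1)] notIn_Un_bij_betw3[of 0 "{1..<n}" "\<lambda>x. a * x mod n" "{1..<n}"]
    by simp
qed

lemma sum4_reindex_bij_betw:
  assumes "bij_betw h I I"
  shows "(\<Sum>a\<in>I. \<Sum>b\<in>I. \<Sum>c\<in>I. \<Sum>d\<in>I. F (h a) (h b) (h c) (h d))
       = (\<Sum>a\<in>I. \<Sum>b\<in>I. \<Sum>c\<in>I. \<Sum>d\<in>I. F a b c d)"
proof -
  have reindex: "(\<Sum>x\<in>I. g (h x)) = sum g I" for g :: "'a \<Rightarrow> 'b"
    by (rule sum.reindex_bij_betw[OF assms])
  have "(\<Sum>a\<in>I. \<Sum>b\<in>I. \<Sum>c\<in>I. \<Sum>d\<in>I. F (h a) (h b) (h c) (h d))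
      = (\<Sum>a\<in>I. \<Sum>b\<in>I. \<Sum>c\<in>I. \<Sum>d\<in>I. F a (h b) (h c) (h d))"
    by (rule reindex)
  also have "\<dots> = (\<Sum>a\<in>I. \<Sum>b\<in>I. \<Sum>c\<in>I. \<Sum>d\<in>I. F a b (h c) (h d))"
    by (rule sum.cong[OF refl reindex])
  also have "\<dots> = (\<Sum>a\<in>I. \<Sum>b\<in>I. \<Sum>c\<in>I. \<Sum>d\<in>I. F a b c (h d))"
    by (rule sum.cong[OF refl sum.cong[OF refl reindex]])
  also have "\<dots> = (\<Sum>a\<in>I. \<Sum>b\<in>I. \<Sum>c\<in>I. \<Sum>d\<in>I. F a b c d)"
    by (rule sum.cong[OF refl sum.cong[OF refl sum.cong[OF refl reindex]]])
  finally show ?thesis .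
qed


lemma dirichlet_char_quartic_quadratic_scale:
  assumes "dirichlet_char m chi" "coprime t (int m)"
  shows "cnj (chi ((t*a)^4 + (t*b)^4 - (t*c)^4 - (t*d)^4)) * chi ((t*a)^2 + (t*b)^2 - (t*c)^2 - (t*d)^2)
       = cnj (chi t) ^ 2 * (cnj (chi (a^4 + b^4 - c^4 - d^4)) * chi (a^2 + b^2 - c^2 - d^2))"
proof -
  have unit: "cnj (chi t) * chi t = 1"
    using dirichlet_char_norm[OF assms] by (metis complex_norm_square mult.commute of_real_1 power_one)
  have homogeneous: "(t*a)^n + (t*b)^n - (t*c)^n - (t*d)^n = t^n * (a^n + b^n - c^n - d^n)" for n
    by (simp add: algebra_simps power_mult_distrib)
  have "cnj (chi ((t*a)^4 + (t*b)^4 - (t*c)^4 - (t*d)^4)) * chi ((t*a)^2 + (t*b)^2 - (t*c)^2 - (t*d)^2)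
      = cnj (chi t) ^ 2 * (cnj (chi t) * chi t) ^ 2
        * (cnj (chi (a^4 + b^4 - c^4 - d^4)) * chi (a^2 + b^2 - c^2 - d^2))"
    unfolding homogeneous dirichlet_char_mult[OF assms(1)] dirichlet_char_power[OF assms(1)]
    by (simp add: algebra_simps power_mult_distrib eval_nat_numeral)
  then show ?thesis
    unfolding unit by simp
qed

lemma quartic_quadratic_char_sum_eq_0:
  assumes chi: "dirichlet_char m chi" and "coprime t (int m)" "chi t ^ 2 \<noteq> 1"
  shows "(\<Sum>a\<in>{0..<int m}. \<Sum>b\<in>{0..<int m}. \<Sum>c\<in>{0..<int m}. \<Sum>d\<in>{0..<int m}.
           cnj (chi (a^4 + b^4 - c^4 - d^4)) * chi (a^2 + b^2 - c^2 - d^2)) = 0"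
proof -
  define G where "G a b c d = cnj (chi (a^4 + b^4 - c^4 - d^4)) * chi (a^2 + b^2 - c^2 - d^2)"
    for a b c d
  define S where "S = (\<Sum>a\<in>{0..<int m}. \<Sum>b\<in>{0..<int m}. \<Sum>c\<in>{0..<int m}. \<Sum>d\<in>{0..<int m}. G a b c d)"
  define h where "h = (\<lambda>x. t * x mod int m)"
  have "m > 0"
    using chi unfolding dirichlet_char_def by simp
  have h_cong: "[h x = t * x] (mod int m)" for x
    unfolding h_def by (simp add: Cong.cong_def)
  have G_h: "G (h a) (h b) (h c) (h d) = cnj (chi t) ^ 2 * G a b c d" for a b c d
  proof -
    have "[h a ^ n + h b ^ n - h c ^ n - h d ^ n = (t*a)^n + (t*b)^n - (t*c)^n - (t*d)^n] (mod int m)" for n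
      by (intro cong_add cong_diff cong_pow h_cong)
    then have "G (h a) (h b) (h c) (h d) = G (t*a) (t*b) (t*c) (t*d)"
      unfolding G_def using dirichlet_char_cong[OF chi] by metis
    then show ?thesis
      unfolding G_def using dirichlet_char_quartic_quadratic_scale[OF chi assms(2)] by simp
  qed
  have "S = (\<Sum>a\<in>{0..<int m}. \<Sum>b\<in>{0..<int m}. \<Sum>c\<in>{0..<int m}. \<Sum>d\<in>{0..<int m}.
              G (h a) (h b) (h c) (h d))"
    unfolding S_def h_def
    by (rule sum4_reindex_bij_betw[symmetric, OF bij_betw_mult_mod[OF assms(2)]]) (use \<open>m > 0\<close> in simp)
  also have "\<dots> = cnj (chi t) ^ 2 * S"
    unfolding S_def G_h by (simp add: sum_distrib_left)
  finally have "S = cnj (chi t) ^ 2 * S" .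
  moreover have "cnj (chi t) ^ 2 \<noteq> 1"
    using assms(3) by (metis complex_cnj_cnj complex_cnj_one complex_cnj_power)
  ultimately have "S = 0"
    by (metis mult_cancel_right1 mult.commute)
  then show ?thesis
    unfolding S_def G_def .
qed

theorem lemma2p3:
  fixes p :: nat and chi1 chi2 :: "int \<Rightarrow> complex"
  assumes "prime p" and "odd p" and "[p = 3] (mod 4)"
    and "dirichlet_char p chi1" and "dirichlet_char p chi2"
    and "odd_char chi1" and "odd_char chi2"
    and "(\<lambda>x. chi1 x * chi2 x) \<noteq> principal_char p"
  shows "(\<Sum>a\<in>{0..<int p}. \<Sum>b\<in>{0..<int p}. \<Sum>c\<in>{0..<int p}. \<Sum>d\<in>{0..<int p}.
           cnj (chi1 (a^4 + b^4 - c^4 - d^4)) * cnj (chi2 (a^4 + b^4 - c^4 - d^4))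
           * (chi1 (a^2 + b^2 - c^2 - d^2) * chi2 (a^2 + b^2 - c^2 - d^2))) = 0"
proof -
  define chi where "chi = (\<lambda>x. chi1 x * chi2 x)"
  have chi: "dirichlet_char p chi"
    unfolding chi_def using dirichlet_char_times[OF assms(4,5)] .
  have "chi (-1) = 1"
    using assms(6,7) unfolding chi_def odd_char_def by simp
  then obtain t where "coprime t (int p)" "chi t ^ 2 \<noteq> 1"
    using even_char_eq_principal_if_squares_one[OF assms(1,3) chi] assms(8) unfolding chi_def by blast
  then have "(\<Sum>a\<in>{0..<int p}. \<Sum>b\<in>{0..<int p}. \<Sum>c\<in>{0..<int p}. \<Sum>d\<in>{0..<int p}.
           cnj (chi (a^4 + b^4 - c^4 - d^4)) * chi (a^2 + b^2 - c^2 - d^2)) = 0"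
    by (rule quartic_quadratic_char_sum_eq_0[OF chi])
  then show ?thesis
    unfolding chi_def by simp
qed

end
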